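(* Let $\mathbf H\subset GL_m(\mathbb C)$ be a finite unitary group and $\mathbf G=\mathbf H\wr\mathrm{Sym}_n$ acting on $\mathbb C^{mn}$, with the subgroup sequence, coset leaders and initial vector described in the context. Then the subgroup decoding algorithm decodes robustly.
   Context: $\mathbf G$ is the group of $mn\times mn$ block permutation matrices with nonzero $m\times m$ blocks in $\mathbf H$; elements written $\sigma(h_1,\dots,h_n)$. Subgroups: $\mathbf G_0=\{I\}$, $\mathbf G_{2l-1}=(\mathbf H\wr\mathrm{Sym}_l)\oplus\{I_{m(n-l)}\}$ ($1\le l\le n$), $\mathbf G_{2l}=(\mathbf H\wr\mathrm{Sym}_l)\oplus\mathbf H\oplus\{I_{m(n-l-1)}\}$ ($1\le l\le n-1$), so $\mathbf G_{2n-1}=\mathbf G$. Coset leaders: $\operatorname{CL}(\mathbf G_1/\mathbf G_0)=\mathbf G_1$; $\operatorname{CL}(\mathbf G_{2l}/\mathbf G_{2l-1})=\{(1,\dots,1,h,1,\dots,1):h\in\mathbf H\text{ in slot }l+1\}$; $\operatorname{CL}(\mathbf G_{2l+1}/\mathbf G_{2l})=\{(j\ j{+}1\ \cdots\ l{+}1):1\le j\le l+1\}$ (block permutation cycles). Initial vector $\mathbf x_0=(u_1\mathbf v_0,\dots,u_n\mathbf v_0)$, where $\mathbf v_0\in\mathbb C^m$ is a unit vector such that the identity is the unique $h\in\mathbf H$ minimizing $\|h\mathbf v_0-\mathbf v_0\|$, and $0<u_1<\cdots<u_n$ are reals with $\|\mathbf x_0\|=1$. $S=\operatorname{Stab}_{\mathbf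 G}(\mathbf x_0)$. Subgroup decoding algorithm: $\mathbf r_0=\mathbf r$; for $k=1,\dots,2n-1$ choose $d_k\in\operatorname{CL}(\mathbf G_k/\mathbf G_{k-1})$ minimizing $\|a\mathbf r_{k-1}-\mathbf x_0\|$ (ties broken by a fixed ordering), $\mathbf r_k=d_k\mathbf r_{k-1}$; output $d_{2n-1}\cdots d_1$. It decodes robustly if for all $g\in\mathbf G$ and $\mathbf r$ with $\|\mathbf r-g^{-1}\mathbf x_0\|<\|\mathbf r-h^{-1}\mathbf x_0\|$ for all $h\notin Sg$, the output lies in $Sg$. *)

theory Defs
  imports "Jordan_Normal_Form.Schur_Decomposition" "HOL-Combinatorics.Permutations"
begin

definition vnorm :: "complex vec \<Rightarrow> real" where
  "vnorm v = sqrt (\<Sum>i<dim_vec v. (cmod (v $ i))\<^sup>2)"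

definition matinv :: "nat \<Rightarrow> complex mat \<Rightarrow> complex mat" where
  "matinv N g = (THE g'. g' \<in> carrier_mat N N \<and> g' * g = 1\<^sub>m N \<and> g * g' = 1\<^sub>m N)"

(* sigma(h_0,...,h_{n-1}) (0-based block indices): the mn x mn block matrix whose
   block in block-row sigma c, block-column c is h_c, all other blocks zero.
   Thus block sigma(c) of (g *v x) equals h_c *v (block c of x). *)
definition blockmat :: "nat \<Rightarrow> nat \<Rightarrow> (nat \<Rightarrow> nat) \<Rightarrow> (nat \<Rightarrow> complex mat) \<Rightarrow> complex mat" where
  "blockmat m n \<sigma> hs = mat (m*n) (m*n)
     (\<lambda>(r,c). if \<sigma> (c div m) = r div m then hs (c div m) $$ (r mod m, c mod m) else 0)"

(* the wreath product G = H wr Sym_n as block permutation matrices *)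
definition Gset :: "nat \<Rightarrow> nat \<Rightarrow> complex mat set \<Rightarrow> complex mat set" where
  "Gset m n H = {blockmat m n \<sigma> hs | \<sigma> hs. \<sigma> permutes {..<n} \<and> (\<forall>j<n. hs j \<in> H)}"

definition cyc :: "nat \<Rightarrow> nat \<Rightarrow> nat \<Rightarrow> nat" where
  "cyc j l = (\<lambda>i. if j \<le> i \<and> i < l then i + 1 else if i = l then j else i)"

(* coset leaders CL(G_k / G_{k-1}), k = 1..2n-1, with 0-based block slots:
   k = 1      : G_1 = H (+) I
   k = 2l     : diag(1,..,1,h,1,..,1), h in H in (1-based) slot l+1
   k = 2l+1   : block cycles (j j+1 ... l+1) (1-based), 1 <= j <= l+1 *)
definition CL :: "nat \<Rightarrow> nat \<Rightarrow> complex mat set \<Rightarrow> nat \<Rightarrow> complex mat set" where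
  "CL m n H k =
    (if k = 1 then {blockmat m n id (\<lambda>i. if i = 0 then h else 1\<^sub>m m) | h. h \<in> H}
     else if even k then {blockmat m n id (\<lambda>i. if i = k div 2 then h else 1\<^sub>m m) | h. h \<in> H}
     else {blockmat m n (cyc j (k div 2)) (\<lambda>_. 1\<^sub>m m) | j. j \<le> k div 2})"

definition x0vec :: "nat \<Rightarrow> nat \<Rightarrow> (nat \<Rightarrow> real) \<Rightarrow> complex vec \<Rightarrow> complex vec" where
  "x0vec m n u v0 = vec (m*n) (\<lambda>i. complex_of_real (u (i div m)) * v0 $ (i mod m))"

definition pick :: "(complex mat \<Rightarrow> nat) \<Rightarrow> complex vec \<Rightarrow> complex mat set \<Rightarrow> complex vec \<Rightarrow> complex mat" where
  "pick rk x0 C r = (THE d. d \<in> C \<and> (\<forall>d'\<in>C. vnorm (d *\<^sub>v r - x0) \<le> vnorm (d' *\<^sub>v r - x0))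
      \<and> (\<forall>d'\<in>C. vnorm (d' *\<^sub>v r - x0) = vnorm (d *\<^sub>v r - x0) \<longrightarrow> rk d \<le> rk d'))"

primrec dec_run :: "nat \<Rightarrow> nat \<Rightarrow> complex mat set \<Rightarrow> (complex mat \<Rightarrow> nat) \<Rightarrow> complex vec
    \<Rightarrow> complex vec \<Rightarrow> nat \<Rightarrow> complex mat \<times> complex vec" where
  "dec_run m n H rk x0 r 0 = (1\<^sub>m (m*n), r)"
| "dec_run m n H rk x0 r (Suc k) =
     (let (P, rr) = dec_run m n H rk x0 r k;
          d = pick rk x0 (CL m n H (Suc k)) rr
      in (d * P, d *\<^sub>v rr))"

definition decode :: "nat \<Rightarrow> nat \<Rightarrow> complex mat set \<Rightarrow> (complex mat \<Rightarrow> nat) \<Rightarrow> complex vec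
    \<Rightarrow> complex vec \<Rightarrow> complex mat" where
  "decode m n H rk x0 r = fst (dec_run m n H rk x0 r (2*n - 1))"

definition Stab :: "nat \<Rightarrow> nat \<Rightarrow> complex mat set \<Rightarrow> complex vec \<Rightarrow> complex mat set" where
  "Stab m n H x0 = {s \<in> Gset m n H. s *\<^sub>v x0 = x0}"

definition decodes_robustly :: "nat \<Rightarrow> nat \<Rightarrow> complex mat set \<Rightarrow> (complex mat \<Rightarrow> nat)
    \<Rightarrow> complex vec \<Rightarrow> bool" where
  "decodes_robustly m n H rk x0 \<longleftrightarrow>
     (\<forall>g\<in>Gset m n H. \<forall>r\<in>carrier_vec (m*n).
        (\<forall>h\<in>Gset m n H. h \<notin> (\<lambda>s. s * g) ` Stab m n H x0 \<longrightarrow>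
            vnorm (r - matinv (m*n) g *\<^sub>v x0) < vnorm (r - matinv (m*n) h *\<^sub>v x0))
        \<longrightarrow> decode m n H rk x0 r \<in> (\<lambda>s. s * g) ` Stab m n H x0)"

end

theory Submission
  imports Defs
begin

(* Every element of G is unitary, so minimising ||d r - x0|| over a set of coset leaders amounts
   to maximising the correlation Re <d r, x0> = sum_c u_c Re <(d r)_c, v0> over its blocks.
   The steps with leaders from H turn each block by the best element of H; the cycle steps
   insert the block just treated among the earlier ones so that the block correlations stay
   sorted like the weights u_c. By the rearrangement inequality the final vector then has the
   largest correlation in its G-orbit: the decoder returns a nearest element of G, and the
   robustness hypothesis forces every nearest element into S g. *)

lemma sum_lessThan_mult_blocks:
  fixes m n :: nat
  shows "(\<Sum>k<m*n. f k) = (\<Sum>c<n. \<Sum>i<m. f (c*m+i))"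
proof -
  have shift: "(\<Sum>k\<in>{a..<a+m}. f k) = (\<Sum>i<m. f (a+i))" for a
    using sum.shift_bounds_nat_ivl[of f 0 a m] by (simp add: atLeast0LessThan add.commute)
  show ?thesis
    using sum.nat_group[of f m n] by (simp add: shift mult.commute)
qed

lemma div_less_of_less_mult: "(k::nat) < m*n \<Longrightarrow> k div m < n"
  by (simp add: less_mult_imp_div_less mult.commute)

lemma block_index_less: assumes "c < n" "i < (m::nat)" shows "c*m+i < m*n"
proof -
  have "Suc c * m \<le> n * m" using assms(1) by (intro mult_le_mono1) simp
  then show ?thesis using assms(2) by (simp add: mult.commute)
qed

lemma sum_lessThan_mult_single_block:
  fixes b n m :: nat
  assumes "b < n" and "\<And>k. k < m*n \<Longrightarrow> k div m \<noteq> b \<Longrightarrow> f k = 0"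
  shows "(\<Sum>k<m*n. f k) = (\<Sum>i<m. f (b*m+i))"
proof -
  have "(\<Sum>i<m. f (c*m+i)) = 0" if "c < n" "c \<noteq> b" for c
    using that assms(2) block_index_less by (intro sum.neutral) auto
  then have "(\<Sum>c<n. \<Sum>i<m. f (c*m+i)) = (\<Sum>i<m. f (b*m+i))"
    using assms(1) by (subst sum.remove[of _ b]) auto
  then show ?thesis by (simp add: sum_lessThan_mult_blocks)
qed

lemma sum_two_nonzero:
  assumes "finite A" "a \<in> A" "b \<in> A" "a \<noteq> b" "\<And>c. c \<in> A \<Longrightarrow> c \<noteq> a \<Longrightarrow> c \<noteq> b \<Longrightarrow> f c = 0"
  shows "sum f A = f a + f b"
proof -
  have "sum f A = sum f {a,b}" by (rule sum.mono_neutral_right) (use assms in auto)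
  then show ?thesis using assms(4) by simp
qed

subsection \<open>Block matrices and blocks of vectors\<close>

lemma blockmat_carrier [simp]: "blockmat m n \<sigma> hs \<in> carrier_mat (m*n) (m*n)"
  by (simp add: blockmat_def)

lemma blockmat_dims [simp]:
  "dim_row (blockmat m n \<sigma> hs) = m*n" "dim_col (blockmat m n \<sigma> hs) = m*n"
  by (simp_all add: blockmat_def)

lemma blockmat_index:
  "r < m*n \<Longrightarrow> c < m*n \<Longrightarrow> blockmat m n \<sigma> hs $$ (r,c) =
     (if \<sigma> (c div m) = r div m then hs (c div m) $$ (r mod m, c mod m) else 0)"
  by (simp add: blockmat_def)

lemma blockmat_cong:
  "(\<And>c. c < n \<Longrightarrow> \<sigma> c = \<tau> c) \<Longrightarrow> (\<And>c. c < n \<Longrightarrow> hs c = hs' c) \<Longrightarrow>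
    blockmat m n \<sigma> hs = blockmat m n \<tau> hs'"
  by (rule eq_matI) (auto simp: blockmat_index div_less_of_less_mult)

definition vec_block :: "nat \<Rightarrow> complex vec \<Rightarrow> nat \<Rightarrow> complex vec" where
  "vec_block m y c = vec m (\<lambda>i. y $ (c*m+i))"

lemma vec_block_carrier [simp]: "vec_block m y c \<in> carrier_vec m"
  and vec_block_dim [simp]: "dim_vec (vec_block m y c) = m"
  and vec_block_index [simp]: "i < m \<Longrightarrow> vec_block m y c $ i = y $ (c*m+i)"
  by (simp_all add: vec_block_def)

lemma permutes_lessThan_less: "\<sigma> permutes {..<n} \<Longrightarrow> c < n \<Longrightarrow> \<sigma> c < n"
  by (metis lessThan_iff permutes_in_image)

lemma vec_block_blockmat_mult:
  assumes \<sigma>: "\<sigma> permutes {..<n}" and c: "c < n" and hs: "\<forall>c<n. hs c \<in> carrier_mat m m"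
    and y: "y \<in> carrier_vec (m*n)"
  shows "vec_block m (blockmat m n \<sigma> hs *\<^sub>v y) (\<sigma> c) = hs c *\<^sub>v vec_block m y c"
proof (rule eq_vecI)
  have hc: "hs c \<in> carrier_mat m m" using hs c by auto
  then show "dim_vec (vec_block m (blockmat m n \<sigma> hs *\<^sub>v y) (\<sigma> c)) = dim_vec (hs c *\<^sub>v vec_block m y c)"
    by simp
  fix i assume "i < dim_vec (hs c *\<^sub>v vec_block m y c)"
  then have i: "i < m" using hc by simp
  have row: "\<sigma> c * m + i < m*n" using block_index_less[OF permutes_lessThan_less[OF \<sigma> c] i] .
  have "vec_block m (blockmat m n \<sigma> hs *\<^sub>v y) (\<sigma> c) $ i
      = (\<Sum>k<m*n. blockmat m n \<sigma> hs $$ (\<sigma> c * m + i, k) * y $ k)"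
    using i row y by (simp add: scalar_prod_def lessThan_atLeast0)
  also have "\<dots> = (\<Sum>i'<m. blockmat m n \<sigma> hs $$ (\<sigma> c * m + i, c*m+i') * y $ (c*m+i'))"
  proof (rule sum_lessThan_mult_single_block[OF c])
    fix k assume k: "k < m*n" "k div m \<noteq> c"
    then have "\<sigma> (k div m) \<noteq> \<sigma> c" using permutes_inj[OF \<sigma>] by (auto dest: injD)
    then show "blockmat m n \<sigma> hs $$ (\<sigma> c * m + i, k) * y $ k = 0"
      using k row i by (simp add: blockmat_index)
  qed
  also have "\<dots> = (\<Sum>i'<m. hs c $$ (i, i') * vec_block m y c $ i')"
    using i row block_index_less[OF c] by (intro sum.cong) (auto simp: blockmat_index)
  also have "\<dots> = (hs c *\<^sub>v vec_block m y c) $ i"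
    using i hc by (simp add: scalar_prod_def lessThan_atLeast0)
  finally show "vec_block m (blockmat m n \<sigma> hs *\<^sub>v y) (\<sigma> c) $ i = (hs c *\<^sub>v vec_block m y c) $ i" .
qed

lemma blockmat_mult:
  assumes \<sigma>: "\<sigma> permutes {..<n}"
    and hs: "\<forall>c<n. hs c \<in> carrier_mat m m" and ks: "\<forall>c<n. ks c \<in> carrier_mat m m"
  shows "blockmat m n \<tau> ks * blockmat m n \<sigma> hs = blockmat m n (\<tau> \<circ> \<sigma>) (\<lambda>c. ks (\<sigma> c) * hs c)"
proof (rule eq_matI)
  fix i j assume "i < dim_row (blockmat m n (\<tau> \<circ> \<sigma>) (\<lambda>c. ks (\<sigma> c) * hs c))"
    "j < dim_col (blockmat m n (\<tau> \<circ> \<sigma>) (\<lambda>c. ks (\<sigma> c) * hs c))"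
  then have i: "i < m*n" and j: "j < m*n" by auto
  define c where "c = j div m"
  define b where "b = \<sigma> c"
  have c: "c < n" unfolding c_def using j by (rule div_less_of_less_mult)
  have b: "b < n" unfolding b_def using permutes_lessThan_less[OF \<sigma> c] .
  have m0: "m > 0" using j by (cases m) auto
  have hc: "hs c \<in> carrier_mat m m" and kb: "ks b \<in> carrier_mat m m" using hs ks b c by auto
  have "(blockmat m n \<tau> ks * blockmat m n \<sigma> hs) $$ (i,j) =
        (\<Sum>k<m*n. blockmat m n \<tau> ks $$ (i,k) * blockmat m n \<sigma> hs $$ (k,j))"
    using i j by (simp add: scalar_prod_def lessThan_atLeast0)
  also have "\<dots> = (\<Sum>i'<m. blockmat m n \<tau> ks $$ (i,b*m+i') * blockmat m n \<sigma> hs $$ (b*m+i',j))"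
    by (rule sum_lessThan_mult_single_block[OF b]) (auto simp: blockmat_index j b_def c_def)
  also have "\<dots> = (\<Sum>i'<m. (if \<tau> b = i div m then ks b $$ (i mod m, i') else 0) * hs c $$ (i', j mod m))"
    using block_index_less[OF b] i j m0 by (intro sum.cong) (auto simp: blockmat_index b_def c_def)
  also have "\<dots> = (if \<tau> b = i div m then (ks b * hs c) $$ (i mod m, j mod m) else 0)"
    using hc kb m0 by (auto simp: scalar_prod_def lessThan_atLeast0)
  also have "\<dots> = blockmat m n (\<tau> \<circ> \<sigma>) (\<lambda>c. ks (\<sigma> c) * hs c) $$ (i,j)"
    using i j by (simp add: blockmat_index b_def c_def)
  finally show "(blockmat m n \<tau> ks * blockmat m n \<sigma> hs) $$ (i,j) =
      blockmat m n (\<tau> \<circ> \<sigma>) (\<lambda>c. ks (\<sigma> c) * hs c) $$ (i,j)" .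
qed auto

lemma blockmat_id_one: "blockmat m n id (\<lambda>_. 1\<^sub>m m) = 1\<^sub>m (m*n)"
proof (rule eq_matI)
  fix i j assume "i < dim_row (1\<^sub>m (m * n))" "j < dim_col (1\<^sub>m (m * n))"
  then have i: "i < m*n" and j: "j < m*n" by auto
  have m0: "m > 0" using j by (cases m) auto
  have "(i = j) = (i div m = j div m \<and> i mod m = j mod m)" by (metis div_mult_mod_eq)
  then show "blockmat m n id (\<lambda>_. 1\<^sub>m m) $$ (i, j) = 1\<^sub>m (m * n) $$ (i, j)"
    using i j m0 by (auto simp: blockmat_index)
qed auto

lemma mat_adjoint_dims [simp]:
  "dim_row (mat_adjoint A) = dim_col A" "dim_col (mat_adjoint A) = dim_row A"
  by (simp_all add: mat_adjoint_def)

lemma mat_adjoint_carrier: "A \<in> carrier_mat a b \<Longrightarrow> mat_adjoint A \<in> carrier_mat b a"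
  by auto

lemma mat_adjoint_index:
  "i < dim_col A \<Longrightarrow> j < dim_row A \<Longrightarrow> mat_adjoint (A::complex mat) $$ (i,j) = cnj (A $$ (j,i))"
  by (simp add: mat_adjoint_def mat_of_rows_index)

lemma blockmat_adjoint:
  assumes \<sigma>: "\<sigma> permutes {..<n}" and hs: "\<forall>c<n. hs c \<in> carrier_mat m m"
  shows "mat_adjoint (blockmat m n \<sigma> hs) =
    blockmat m n (inv_into UNIV \<sigma>) (\<lambda>p. mat_adjoint (hs (inv_into UNIV \<sigma> p)))"
proof (rule eq_matI)
  fix i j assume "i < dim_row (blockmat m n (inv_into UNIV \<sigma>) (\<lambda>p. mat_adjoint (hs (inv_into UNIV \<sigma> p))))"
    "j < dim_col (blockmat m n (inv_into UNIV \<sigma>) (\<lambda>p. mat_adjoint (hs (inv_into UNIV \<sigma> p))))"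
  then have i: "i < m*n" and j: "j < m*n" by auto
  have m0: "m > 0" using j by (cases m) auto
  have inv_eq: "(inv_into UNIV \<sigma> (j div m) = i div m) = (\<sigma> (i div m) = j div m)"
    using \<sigma> by (metis permutes_inverses(1) permutes_inverses(2))
  have "hs (i div m) \<in> carrier_mat m m" using hs div_less_of_less_mult[OF i] by auto
  then show "mat_adjoint (blockmat m n \<sigma> hs) $$ (i, j) =
      blockmat m n (inv_into UNIV \<sigma>) (\<lambda>p. mat_adjoint (hs (inv_into UNIV \<sigma> p))) $$ (i, j)"
    using i j m0 inv_eq by (cases "\<sigma> (i div m) = j div m") (auto simp: blockmat_index mat_adjoint_index)
qed auto

lemma vnorm_nonneg: "0 \<le> vnorm v"
  by (simp add: vnorm_def sum_nonneg)

lemma vnorm_square: "(vnorm y)\<^sup>2 = (\<Sum>k<dim_vec y. (cmod (y $ k))\<^sup>2)"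
  by (simp add: vnorm_def sum_nonneg)

lemma vnorm_le_iff_square_le: "vnorm x \<le> vnorm y \<longleftrightarrow> (vnorm x)\<^sup>2 \<le> (vnorm y)\<^sup>2"
  using vnorm_nonneg by (simp add: abs_le_square_iff[symmetric])

lemma cmod_diff_square: "(cmod (a - b))\<^sup>2 = (cmod a)\<^sup>2 - 2 * Re (a * cnj b) + (cmod b)\<^sup>2"
  unfolding cmod_power2 by (simp add: power2_diff algebra_simps)

lemma vnorm_mult_unitary:
  fixes A :: "complex mat"
  assumes A: "A \<in> carrier_mat N N" and unitary: "mat_adjoint A * A = 1\<^sub>m N"
    and v: "v \<in> carrier_vec N"
  shows "vnorm (A *\<^sub>v v) = vnorm v"
proof -
  have delta: "(\<Sum>i<N. cnj (A $$ (i,k)) * A $$ (i,j)) = (if k = j then 1 else 0)"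
    if "k < N" "j < N" for k j
  proof -
    have "(mat_adjoint A * A) $$ (k,j) = (\<Sum>i<N. cnj (A $$ (i,k)) * A $$ (i,j))"
      using A that by (simp add: scalar_prod_def lessThan_atLeast0 mat_adjoint_index)
    then show ?thesis using unitary that by simp
  qed
  have "complex_of_real (\<Sum>i<N. (cmod ((A *\<^sub>v v) $ i))\<^sup>2)
      = (\<Sum>i<N. (A *\<^sub>v v) $ i * cnj ((A *\<^sub>v v) $ i))"
    by (simp only: of_real_sum complex_norm_square)
  also have "\<dots> = (\<Sum>i<N. (\<Sum>j<N. A $$ (i,j) * v $ j) * (\<Sum>k<N. cnj (A $$ (i,k)) * cnj (v $ k)))"
    using A v by (intro sum.cong refl) (simp add: scalar_prod_def lessThan_atLeast0 cnj_sum)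
  also have "\<dots> = (\<Sum>i<N. \<Sum>k<N. \<Sum>j<N. (v $ j * cnj (v $ k)) * (cnj (A $$ (i,k)) * A $$ (i,j)))"
    by (simp add: sum_product sum_distrib_left mult_ac)
  also have "\<dots> = (\<Sum>i<N. \<Sum>j<N. \<Sum>k<N. (v $ j * cnj (v $ k)) * (cnj (A $$ (i,k)) * A $$ (i,j)))"
    by (rule sum.cong[OF refl], rule sum.swap)
  also have "\<dots> = (\<Sum>j<N. \<Sum>i<N. \<Sum>k<N. (v $ j * cnj (v $ k)) * (cnj (A $$ (i,k)) * A $$ (i,j)))"
    by (rule sum.swap)
  also have "\<dots> = (\<Sum>j<N. \<Sum>k<N. \<Sum>i<N. (v $ j * cnj (v $ k)) * (cnj (A $$ (i,k)) * A $$ (i,j)))"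
    by (rule sum.cong[OF refl], rule sum.swap)
  also have "\<dots> = (\<Sum>j<N. \<Sum>k<N. (v $ j * cnj (v $ k)) * (\<Sum>i<N. cnj (A $$ (i,k)) * A $$ (i,j)))"
    by (simp add: sum_distrib_left)
  also have "\<dots> = (\<Sum>j<N. v $ j * cnj (v $ j))"
    by (simp add: delta if_distrib cong: if_cong)
  also have "\<dots> = complex_of_real (\<Sum>i<N. (cmod (v $ i))\<^sup>2)"
    by (simp only: of_real_sum complex_norm_square)
  finally have "(\<Sum>i<N. (cmod ((A *\<^sub>v v) $ i))\<^sup>2) = (\<Sum>i<N. (cmod (v $ i))\<^sup>2)"
    using of_real_eq_iff by blast
  then show ?thesis using A v by (simp add: vnorm_def)
qed


subsection \<open>Rearrangement inequality\<close>

lemma sum_mult_transpose_le: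
  fixes u b :: "nat \<Rightarrow> real"
  assumes "finite A" "t \<in> A" "p \<in> A" "u t \<le> u p" "b t \<le> b p"
  shows "(\<Sum>j\<in>A. u (transpose t p j) * b j) \<le> (\<Sum>j\<in>A. u j * b j)"
proof (cases "t = p")
  case False
  have "(\<Sum>j\<in>A. u j * b j) - (\<Sum>j\<in>A. u (transpose t p j) * b j)
      = (\<Sum>j\<in>A. (u j - u (transpose t p j)) * b j)"
    by (simp add: sum_subtractf left_diff_distrib)
  also have "\<dots> = (u t - u p) * b t + (u p - u t) * b p"
    by (subst sum_two_nonzero[of A t p]) (use assms False in auto)
  also have "\<dots> = (u p - u t) * (b p - b t)" by (simp add: algebra_simps)
  also have "\<dots> \<ge> 0" using assms(4,5) by simp
  finally show ?thesis by simp
qed simp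

lemma rearrangement_inequality:
  fixes u b :: "nat \<Rightarrow> real"
  assumes "\<rho> permutes {..<n}"
    and "\<And>i j. i \<le> j \<Longrightarrow> j < n \<Longrightarrow> u i \<le> u j" and "\<And>i j. i \<le> j \<Longrightarrow> j < n \<Longrightarrow> b i \<le> b j"
  shows "(\<Sum>j<n. u j * b (\<rho> j)) \<le> (\<Sum>j<n. u j * b j)"
  using assms
proof (induction n arbitrary: \<rho>)
  case (Suc n)
  note \<rho> = Suc.prems(1)
  define t where "t = inv_into UNIV \<rho> n"
  have t: "\<rho> t = n" "t < Suc n"
    unfolding t_def using \<rho> permutes_inverses(1) permutes_lessThan_less[OF permutes_inv[OF \<rho>]]
    by auto
  define s where "s = transpose t n"
  have s: "s permutes {..<Suc n}" unfolding s_def using t(2) by (intro permutes_swap_id) auto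
  have \<rho>s: "\<rho> \<circ> s permutes {..<Suc n}" "(\<rho> \<circ> s) n = n"
    using permutes_compose[OF s \<rho>] t(1) by (auto simp: s_def)
  then have \<rho>s_n: "\<rho> \<circ> s permutes {..<n}"
    by (intro permutes_superset[OF \<rho>s(1)]) (auto simp: less_Suc_eq)
  have "(\<Sum>j<Suc n. u j * b (\<rho> j)) = (\<Sum>j<Suc n. u (s j) * b ((\<rho> \<circ> s) j))"
    using sum.reindex_bij_betw[OF permutes_imp_bij[OF s], of "\<lambda>j. u j * b (\<rho> j)"] by simp
  also have "\<dots> = (\<Sum>j<Suc n. u (transpose t n j) * b ((\<rho> \<circ> s) j))"
    by (simp add: s_def)
  also have "\<dots> \<le> (\<Sum>j<Suc n. u j * b ((\<rho> \<circ> s) j))"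
  proof (rule sum_mult_transpose_le)
    show "u t \<le> u n" using Suc.prems(2) t(2) by simp
    show "b ((\<rho> \<circ> s) t) \<le> b ((\<rho> \<circ> s) n)"
      using Suc.prems(3)[of "\<rho> n" n] permutes_lessThan_less[OF \<rho>, of n] \<rho>s(2) by (simp add: s_def)
  qed (use t(2) in auto)
  also have "\<dots> = (\<Sum>j<n. u j * b ((\<rho> \<circ> s) j)) + u n * b n" using \<rho>s(2) by simp
  also have "\<dots> \<le> (\<Sum>j<n. u j * b j) + u n * b n"
    using Suc.IH[OF \<rho>s_n] Suc.prems(2,3) by simp
  finally show ?case by simp
qed simp

subsection \<open>Block cycles\<close>

lemma cyc_permutes:
  assumes "j \<le> l" "l < n"
  shows "cyc j l permutes {..<n}"
proof (rule bij_imp_permutes)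
  have inj: "inj_on (cyc j l) {..<n}"
    using assms(1) by (intro inj_onI) (auto simp: cyc_def split: if_splits)
  have "cyc j l ` {..<n} = {..<n}"
    by (rule endo_inj_surj[OF _ _ inj]) (use assms in \<open>auto simp: cyc_def\<close>)
  then show "bij_betw (cyc j l) {..<n} {..<n}" using inj by (simp add: bij_betw_def)
  show "\<And>x. x \<notin> {..<n} \<Longrightarrow> cyc j l x = x" using assms by (auto simp: cyc_def)
qed

lemma cyc_surj:
  assumes "i \<le> l" "j \<le> l"
  obtains p where "p \<le> l" "cyc j l p = i"
proof -
  consider "i < j" | "i = j" | "j < i" by linarith
  then have "\<exists>p\<le>l. cyc j l p = i"
    by cases (use assms in \<open>auto simp: cyc_def intro: exI[of _ i] exI[of _ l] exI[of _ "i - 1"]\<close>)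
  then show ?thesis using that by blast
qed

text \<open>Neighbouring cycles (j-1 \<dots> l), (j \<dots> l), (j+1 \<dots> l) differ only in the weights
  given to two blocks.\<close>

lemma cycle_optimal_neighbours:
  fixes \<alpha> u :: "nat \<Rightarrow> real"
  assumes l: "l < n" and j: "j \<le> l" and u: "\<And>i j. i < j \<Longrightarrow> j < n \<Longrightarrow> u i < u j"
    and opt: "\<And>j'. j' \<le> l \<Longrightarrow> (\<Sum>c<n. u (cyc j' l c) * \<alpha> c) \<le> (\<Sum>c<n. u (cyc j l c) * \<alpha> c)"
  shows "0 < j \<Longrightarrow> \<alpha> (j-1) \<le> \<alpha> l" and "j < l \<Longrightarrow> \<alpha> l \<le> \<alpha> j"
proof -
  have gain: "(\<Sum>c<n. u (cyc j l c) * \<alpha> c) - (\<Sum>c<n. u (cyc j' l c) * \<alpha> c)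
      = (u (cyc j l a) - u (cyc j' l a)) * \<alpha> a + (u (cyc j l l) - u (cyc j' l l)) * \<alpha> l"
    if "a < l" "\<And>c. c \<noteq> a \<Longrightarrow> c \<noteq> l \<Longrightarrow> cyc j l c = cyc j' l c" for a j'
  proof -
    have "(\<Sum>c<n. u (cyc j l c) * \<alpha> c) - (\<Sum>c<n. u (cyc j' l c) * \<alpha> c)
        = (\<Sum>c<n. (u (cyc j l c) - u (cyc j' l c)) * \<alpha> c)"
      by (simp add: sum_subtractf left_diff_distrib)
    also have "\<dots> = (u (cyc j l a) - u (cyc j' l a)) * \<alpha> a + (u (cyc j l l) - u (cyc j' l l)) * \<alpha> l"
      by (rule sum_two_nonzero) (use that l in auto)
    finally show ?thesis .
  qed
  show "\<alpha> (j-1) \<le> \<alpha> l" if j0: "0 < j"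
  proof -
    have "0 \<le> (\<Sum>c<n. u (cyc j l c) * \<alpha> c) - (\<Sum>c<n. u (cyc (j-1) l c) * \<alpha> c)"
      using opt j by simp
    also have "\<dots> = (u j - u (j-1)) * (\<alpha> l - \<alpha> (j-1))"
      by (subst gain[of "j-1"]) (use j0 j in \<open>auto simp: cyc_def algebra_simps\<close>)
    finally have "0 \<le> (u j - u (j-1)) * (\<alpha> l - \<alpha> (j-1))" .
    moreover have "u (j-1) < u j" using u j0 j l by simp
    ultimately show ?thesis by (simp add: zero_le_mult_iff)
  qed
  show "\<alpha> l \<le> \<alpha> j" if jl: "j < l"
  proof -
    have "0 \<le> (\<Sum>c<n. u (cyc j l c) * \<alpha> c) - (\<Sum>c<n. u (cyc (j+1) l c) * \<alpha> c)"
      using opt jl by simp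
    also have "\<dots> = (u (j+1) - u j) * (\<alpha> j - \<alpha> l)"
      by (subst gain[of j]) (use jl in \<open>auto simp: cyc_def algebra_simps\<close>)
    finally have "0 \<le> (u (j+1) - u j) * (\<alpha> j - \<alpha> l)" .
    moreover have "u j < u (j+1)" using u jl l by simp
    ultimately show ?thesis by (simp add: zero_le_mult_iff)
  qed
qed

lemma cycle_insertion_monotone:
  fixes \<alpha> :: "nat \<Rightarrow> real"
  assumes sorted: "\<And>a b. a \<le> b \<Longrightarrow> b < l \<Longrightarrow> \<alpha> a \<le> \<alpha> b" and j: "j \<le> l"
    and left: "0 < j \<Longrightarrow> \<alpha> (j-1) \<le> \<alpha> l" and right: "j < l \<Longrightarrow> \<alpha> l \<le> \<alpha> j"
    and p: "p \<le> l" "p' \<le> l" and le: "cyc j l p \<le> cyc j l p'"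
  shows "\<alpha> p \<le> \<alpha> p'"
proof -
  consider "p = l" "p' = l" | "p = l" "p' < l" | "p < l" "p' = l" | "p < l" "p' < l"
    using p by linarith
  then show ?thesis
  proof cases
    case 2
    then have "j \<le> p'" using le by (auto simp: cyc_def split: if_splits)
    then show ?thesis using right sorted 2 by (meson order_trans le_less_trans)
  next
    case 3
    then have "p \<le> j - 1" "0 < j" using le j by (auto simp: cyc_def split: if_splits)
    then have "\<alpha> p \<le> \<alpha> (j-1)" using sorted j by simp
    then show ?thesis using left \<open>0 < j\<close> 3 by simp
  next
    case 4
    then have "p \<le> p'" using le by (auto simp: cyc_def split: if_splits)
    then show ?thesis using sorted 4 by blast
  qed simp
qed

subsection \<open>The wreath product and the decoder\<close>

lemma pick_nearest:
  assumes "finite C" "C \<noteq> {}" "inj_on rk C"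
  shows "pick rk x0 C r \<in> C"
    and "d \<in> C \<Longrightarrow> vnorm (pick rk x0 C r *\<^sub>v r - x0) \<le> vnorm (d *\<^sub>v r - x0)"
proof -
  define f where "f d = vnorm (d *\<^sub>v r - x0)" for d
  define P where "P d \<longleftrightarrow> d \<in> C \<and> (\<forall>d'\<in>C. f d \<le> f d') \<and> (\<forall>d'\<in>C. f d' = f d \<longrightarrow> rk d \<le> rk d')"
    for d
  have "\<exists>!d. P d"
  proof (rule ex_ex1I)
    obtain d1 where d1: "d1 \<in> C" "\<forall>d'\<in>C. f d1 \<le> f d'"
      using arg_min_if_finite[OF assms(1,2), of f] by (meson not_less)
    obtain d0 where "d0 \<in> C \<and> f d0 = f d1" "\<forall>d. d \<in> C \<and> f d = f d1 \<longrightarrow> rk d0 \<le> rk d"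
      using ex_has_least_nat[of "\<lambda>d. d \<in> C \<and> f d = f d1" d1 rk] d1(1) by blast
    then show "\<exists>d. P d" using d1 unfolding P_def by metis
  next
    fix d d' assume P: "P d" "P d'"
    then have C: "d \<in> C" "d' \<in> C" and "f d = f d'" unfolding P_def by (auto intro: antisym)
    then have "rk d = rk d'" using P unfolding P_def by (auto intro: antisym)
    then show "d = d'" using inj_onD[OF assms(3)] C by blast
  qed
  moreover have "pick rk x0 C r = (THE d. P d)" unfolding pick_def P_def f_def ..
  ultimately have "P (pick rk x0 C r)" using theI' by simp
  then show "pick rk x0 C r \<in> C" "d \<in> C \<Longrightarrow> vnorm (pick rk x0 C r *\<^sub>v r - x0) \<le> vnorm (d *\<^sub>v r - x0)"
    unfolding P_def f_def by auto
qed


locale wreath_decoder =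
  fixes m n :: nat and H :: "complex mat set" and v0 :: "complex vec"
    and u :: "nat \<Rightarrow> real" and rk :: "complex mat \<Rightarrow> nat"
  assumes n_pos: "n \<ge> 1"
    and finite_H: "finite H" and H_carrier: "H \<subseteq> carrier_mat m m"
    and one_in_H: "1\<^sub>m m \<in> H"
    and mult_in_H: "\<forall>a\<in>H. \<forall>b\<in>H. a * b \<in> H"
    and inverse_in_H: "\<forall>a\<in>H. \<exists>b\<in>H. a * b = 1\<^sub>m m \<and> b * a = 1\<^sub>m m"
    and H_unitary: "\<forall>h\<in>H. h * mat_adjoint h = 1\<^sub>m m"
    and u_first_pos: "0 < u 0" and u_strict_mono: "\<forall>i j. i < j \<and> j < n \<longrightarrow> u i < u j"
    and rk_inj: "inj_on rk (Gset m n H)"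
begin

abbreviation G :: "complex mat set" where "G \<equiv> Gset m n H"

lemma H_elem_carrier: "h \<in> H \<Longrightarrow> h \<in> carrier_mat m m"
  using H_carrier by auto

lemma mat_adjoint_in_H: "h \<in> H \<Longrightarrow> mat_adjoint h \<in> H"
proof -
  assume h: "h \<in> H"
  obtain b where b: "b \<in> H" "h * b = 1\<^sub>m m" using inverse_in_H h by blast
  have hc: "h \<in> carrier_mat m m" and bc: "b \<in> carrier_mat m m" using H_elem_carrier h b by auto
  then have ac: "mat_adjoint h \<in> carrier_mat m m" by (simp add: mat_adjoint_carrier)
  have left: "mat_adjoint h * h = 1\<^sub>m m"
    using mat_mult_left_right_inverse[OF hc ac] H_unitary h by blast
  have "b = (mat_adjoint h * h) * b" using left bc by simp
  also have "\<dots> = mat_adjoint h" using b(2) ac hc bc by (simp add: assoc_mult_mat)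
  finally show ?thesis using b(1) by simp
qed

lemma u_mono: "i \<le> j \<Longrightarrow> j < n \<Longrightarrow> u i \<le> u j"
  using u_strict_mono by (cases "i = j") (auto simp: less_le)

lemma u_pos: "c < n \<Longrightarrow> 0 < u c"
  using u_first_pos u_mono[of 0 c] by auto

lemma GsetE:
  assumes "Q \<in> G"
  obtains \<sigma> hs where "Q = blockmat m n \<sigma> hs" "\<sigma> permutes {..<n}" "\<forall>c<n. hs c \<in> H"
  using assms by (auto simp: Gset_def)

lemma blockmat_in_Gset: "\<sigma> permutes {..<n} \<Longrightarrow> \<forall>c<n. hs c \<in> H \<Longrightarrow> blockmat m n \<sigma> hs \<in> G"
  by (auto simp: Gset_def)

lemma Gset_carrier: "Q \<in> G \<Longrightarrow> Q \<in> carrier_mat (m*n) (m*n)"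
  by (auto simp: Gset_def)

lemma one_in_Gset: "1\<^sub>m (m*n) \<in> G"
  using blockmat_in_Gset[OF permutes_id, of "\<lambda>_. 1\<^sub>m m"] one_in_H by (simp add: blockmat_id_one)

lemma Gset_mult: assumes "Q \<in> G" "Q' \<in> G" shows "Q * Q' \<in> G"
proof -
  obtain \<tau> ks where Q: "Q = blockmat m n \<tau> ks" "\<tau> permutes {..<n}" "\<forall>c<n. ks c \<in> H"
    using assms(1) by (rule GsetE)
  obtain \<sigma> hs where Q': "Q' = blockmat m n \<sigma> hs" "\<sigma> permutes {..<n}" "\<forall>c<n. hs c \<in> H"
    using assms(2) by (rule GsetE)
  have "Q * Q' = blockmat m n (\<tau> \<circ> \<sigma>) (\<lambda>c. ks (\<sigma> c) * hs c)"
    unfolding Q Q' by (rule blockmat_mult) (use Q Q' H_elem_carrier in auto)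
  moreover have "\<forall>c<n. ks (\<sigma> c) * hs c \<in> H"
    using Q(3) Q'(3) mult_in_H permutes_lessThan_less[OF Q'(2)] by blast
  ultimately show ?thesis
    using blockmat_in_Gset[OF permutes_compose[OF Q'(2) Q(2)]] by simp
qed

lemma Gset_adjoint:
  assumes "Q \<in> G"
  shows "mat_adjoint Q \<in> G" and "mat_adjoint Q * Q = 1\<^sub>m (m*n)" and "Q * mat_adjoint Q = 1\<^sub>m (m*n)"
proof -
  obtain \<sigma> hs where Q: "Q = blockmat m n \<sigma> hs" "\<sigma> permutes {..<n}" "\<forall>c<n. hs c \<in> H"
    using assms by (rule GsetE)
  let ?i = "inv_into UNIV \<sigma>"
  define hs' where "hs' p = mat_adjoint (hs (?i p))" for p
  have i: "?i permutes {..<n}" using Q(2) by (rule permutes_inv)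
  have hs': "\<forall>p<n. hs' p \<in> H"
    using Q(3) permutes_lessThan_less[OF i] mat_adjoint_in_H unfolding hs'_def by auto
  have adj: "mat_adjoint Q = blockmat m n ?i hs'"
    unfolding Q(1) hs'_def by (rule blockmat_adjoint) (use Q H_elem_carrier in auto)
  then show "mat_adjoint Q \<in> G" using blockmat_in_Gset[OF i hs'] by simp
  have "Q * mat_adjoint Q = blockmat m n \<sigma> hs * blockmat m n ?i hs'" using adj Q(1) by simp
  also have "\<dots> = blockmat m n (\<sigma> \<circ> ?i) (\<lambda>c. hs (?i c) * hs' c)"
    by (rule blockmat_mult) (use i hs' Q H_elem_carrier in auto)
  also have "\<dots> = blockmat m n id (\<lambda>_. 1\<^sub>m m)"
    using Q(2,3) H_unitary permutes_lessThan_less[OF i]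
    by (intro blockmat_cong) (auto simp: hs'_def permutes_inverses)
  finally show right: "Q * mat_adjoint Q = 1\<^sub>m (m*n)" by (simp add: blockmat_id_one)
  show "mat_adjoint Q * Q = 1\<^sub>m (m*n)"
    by (rule mat_mult_left_right_inverse[OF Gset_carrier[OF assms] _ right])
      (rule mat_adjoint_carrier[OF Gset_carrier[OF assms]])
qed

lemma matinv_Gset: assumes "Q \<in> G" shows "matinv (m*n) Q = mat_adjoint Q"
  unfolding matinv_def
proof (rule the_equality)
  have Q: "Q \<in> carrier_mat (m*n) (m*n)" using Gset_carrier assms .
  then show "mat_adjoint Q \<in> carrier_mat (m*n) (m*n) \<and> mat_adjoint Q * Q = 1\<^sub>m (m*n)
      \<and> Q * mat_adjoint Q = 1\<^sub>m (m*n)"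
    using Gset_adjoint[OF assms] by auto
  fix Q' assume Q': "Q' \<in> carrier_mat (m*n) (m*n) \<and> Q' * Q = 1\<^sub>m (m*n) \<and> Q * Q' = 1\<^sub>m (m*n)"
  have "Q' = (mat_adjoint Q * Q) * Q'" using Gset_adjoint(2)[OF assms] Q' left_mult_one_mat by metis
  also have "\<dots> = mat_adjoint Q"
    using assoc_mult_mat[OF mat_adjoint_carrier[OF Q] Q, of Q' "m*n"] Q' Q by (simp add: carrier_matD)
  finally show "Q' = mat_adjoint Q" .
qed

lemma vnorm_Gset_mult: "Q \<in> G \<Longrightarrow> y \<in> carrier_vec (m*n) \<Longrightarrow> vnorm (Q *\<^sub>v y) = vnorm y"
  using vnorm_mult_unitary Gset_carrier Gset_adjoint(2) by blast

abbreviation x0 :: "complex vec" where "x0 \<equiv> x0vec m n u v0"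

definition corr :: "complex vec \<Rightarrow> real" where
  "corr y = (\<Sum>k<m*n. Re (y $ k * cnj (x0 $ k)))"

definition corr_v0 :: "complex vec \<Rightarrow> real" where
  "corr_v0 a = Re (\<Sum>i<m. a $ i * cnj (v0 $ i))"

abbreviation block_corr :: "complex vec \<Rightarrow> nat \<Rightarrow> real" where
  "block_corr y c \<equiv> corr_v0 (vec_block m y c)"

lemma x0_carrier: "x0 \<in> carrier_vec (m*n)"
  by (simp add: x0vec_def)

lemma vnorm_minus_x0_square:
  assumes y: "y \<in> carrier_vec (m*n)"
  shows "(vnorm (y - x0))\<^sup>2 = (vnorm y)\<^sup>2 - 2 * corr y + (vnorm x0)\<^sup>2"
proof -
  have "(vnorm (y - x0))\<^sup>2 = (\<Sum>k<m*n. (cmod (y $ k))\<^sup>2 - 2 * Re (y $ k * cnj (x0 $ k)) + (cmod (x0 $ k))\<^sup>2)"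
    using y x0_carrier by (simp add: vnorm_square cmod_diff_square)
  also have "\<dots> = (\<Sum>k<m*n. (cmod (y $ k))\<^sup>2) - 2 * corr y + (\<Sum>k<m*n. (cmod (x0 $ k))\<^sup>2)"
    by (simp add: sum.distrib sum_subtractf sum_distrib_left corr_def)
  also have "\<dots> = (vnorm y)\<^sup>2 - 2 * corr y + (vnorm x0)\<^sup>2"
    using y x0_carrier by (simp add: vnorm_square)
  finally show ?thesis .
qed

lemma Gset_dist_le_iff_corr_ge:
  assumes "Q \<in> G" "Q' \<in> G" "y \<in> carrier_vec (m*n)"
  shows "vnorm (Q *\<^sub>v y - x0) \<le> vnorm (Q' *\<^sub>v y - x0) \<longleftrightarrow> corr (Q' *\<^sub>v y) \<le> corr (Q *\<^sub>v y)"
  using assms Gset_carrier[OF assms(1)] Gset_carrier[OF assms(2)]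
  by (simp add: vnorm_le_iff_square_le vnorm_minus_x0_square vnorm_Gset_mult)

lemma corr_eq_sum_blocks: "corr y = (\<Sum>c<n. u c * block_corr y c)"
proof -
  have "corr y = (\<Sum>c<n. \<Sum>i<m. Re (y $ (c*m+i) * cnj (x0 $ (c*m+i))))"
    unfolding corr_def by (rule sum_lessThan_mult_blocks)
  also have "\<dots> = (\<Sum>c<n. \<Sum>i<m. u c * Re (vec_block m y c $ i * cnj (v0 $ i)))"
    by (intro sum.cong refl) (simp add: x0vec_def block_index_less mult.left_commute)
  also have "\<dots> = (\<Sum>c<n. u c * block_corr y c)"
    by (simp only: corr_v0_def Re_sum sum_distrib_left)
  finally show ?thesis .
qed

lemma corr_blockmat_mult:
  assumes \<sigma>: "\<sigma> permutes {..<n}" and hs: "\<forall>c<n. hs c \<in> carrier_mat m m"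
    and y: "y \<in> carrier_vec (m*n)"
  shows "corr (blockmat m n \<sigma> hs *\<^sub>v y) = (\<Sum>c<n. u (\<sigma> c) * corr_v0 (hs c *\<^sub>v vec_block m y c))"
proof -
  have "corr (blockmat m n \<sigma> hs *\<^sub>v y)
      = (\<Sum>c<n. u (\<sigma> c) * block_corr (blockmat m n \<sigma> hs *\<^sub>v y) (\<sigma> c))"
    using sum.reindex_bij_betw[OF permutes_imp_bij[OF \<sigma>],
        of "\<lambda>p. u p * block_corr (blockmat m n \<sigma> hs *\<^sub>v y) p"]
    by (simp add: corr_eq_sum_blocks)
  then show ?thesis using vec_block_blockmat_mult[OF \<sigma> _ hs y] by simp
qed

abbreviation nearest :: "complex mat set \<Rightarrow> complex vec \<Rightarrow> complex mat" where
  "nearest C y \<equiv> pick rk x0 C y"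

lemma nearest_maximises_corr:
  assumes C: "finite C" "C \<noteq> {}" "C \<subseteq> G" and y: "y \<in> carrier_vec (m*n)"
  shows "nearest C y \<in> C" and "d \<in> C \<Longrightarrow> corr (d *\<^sub>v y) \<le> corr (nearest C y *\<^sub>v y)"
proof -
  have inj: "inj_on rk C" using inj_on_subset[OF rk_inj C(3)] .
  show "nearest C y \<in> C" using pick_nearest(1)[OF C(1,2) inj] .
  then show "d \<in> C \<Longrightarrow> corr (d *\<^sub>v y) \<le> corr (nearest C y *\<^sub>v y)"
    using pick_nearest(2)[OF C(1,2) inj] Gset_dist_le_iff_corr_ge C(3) y by blast
qed

definition slot_leaders :: "nat \<Rightarrow> complex mat set" where
  "slot_leaders l = {blockmat m n id (\<lambda>i. if i = l then h else 1\<^sub>m m) | h. h \<in> H}"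

definition cycle_leaders :: "nat \<Rightarrow> complex mat set" where
  "cycle_leaders l = {blockmat m n (cyc j l) (\<lambda>_. 1\<^sub>m m) | j. j \<le> l}"

lemma CL_eq: "CL m n H k = (if k = 1 \<or> even k then slot_leaders (k div 2) else cycle_leaders (k div 2))"
  by (auto simp: CL_def slot_leaders_def cycle_leaders_def)

lemma slot_leaders_leader_set:
  "finite (slot_leaders l)" "slot_leaders l \<noteq> {}" "slot_leaders l \<subseteq> G"
  using finite_H one_in_H blockmat_in_Gset[OF permutes_id]
  by (auto simp: slot_leaders_def Setcompr_eq_image)

lemma cycle_leaders_leader_set:
  assumes "l < n"
  shows "finite (cycle_leaders l)" "cycle_leaders l \<noteq> {}" "cycle_leaders l \<subseteq> G"
proof -
  have "cycle_leaders l = (\<lambda>j. blockmat m n (cyc j l) (\<lambda>_. 1\<^sub>m m)) ` {..l}"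
    by (auto simp: cycle_leaders_def)
  then show "finite (cycle_leaders l)" "cycle_leaders l \<noteq> {}" by auto
  show "cycle_leaders l \<subseteq> G"
    using one_in_H blockmat_in_Gset[OF cyc_permutes[OF _ assms]] by (auto simp: cycle_leaders_def)
qed

lemma CL_leader_set:
  assumes "k \<le> 2*n - 1"
  shows "finite (CL m n H k)" "CL m n H k \<noteq> {}" "CL m n H k \<subseteq> G"
proof -
  have "k div 2 < n" using assms n_pos by auto
  then show "finite (CL m n H k)" "CL m n H k \<noteq> {}" "CL m n H k \<subseteq> G"
    using slot_leaders_leader_set cycle_leaders_leader_set[of "k div 2"] by (simp_all add: CL_eq)
qed

abbreviation run :: "complex vec \<Rightarrow> nat \<Rightarrow> complex mat \<times> complex vec" where
  "run r k \<equiv> dec_run m n H rk x0 r k"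

lemma run_Suc:
  "fst (run r (Suc k)) = nearest (CL m n H (Suc k)) (snd (run r k)) * fst (run r k)"
  "snd (run r (Suc k)) = nearest (CL m n H (Suc k)) (snd (run r k)) *\<^sub>v snd (run r k)"
  by (simp_all add: case_prod_unfold Let_def)

lemma run_in_Gset:
  assumes r: "r \<in> carrier_vec (m*n)"
  shows "k \<le> 2*n - 1 \<Longrightarrow> fst (run r k) \<in> G \<and> snd (run r k) = fst (run r k) *\<^sub>v r"
proof (induction k)
  case 0 then show ?case using one_in_Gset r by simp
next
  case (Suc k)
  let ?P = "fst (run r k)" and ?y = "snd (run r k)"
  let ?d = "nearest (CL m n H (Suc k)) ?y"
  have IH: "?P \<in> G" "?y = ?P *\<^sub>v r" using Suc by auto
  have y: "?y \<in> carrier_vec (m*n)" using Gset_carrier[OF IH(1)] r IH(2) by simp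
  have d: "?d \<in> G"
    using nearest_maximises_corr(1)[OF CL_leader_set[OF Suc.prems] y] CL_leader_set(3)[OF Suc.prems]
    by auto
  have "?d *\<^sub>v ?y = (?d * ?P) *\<^sub>v r"
    using Gset_carrier[OF d] Gset_carrier[OF IH(1)] r IH(2) by simp
  then show ?case unfolding run_Suc using Gset_mult[OF d IH(1)] by simp
qed

lemma run_carrier:
  "r \<in> carrier_vec (m*n) \<Longrightarrow> k \<le> 2*n - 1 \<Longrightarrow> snd (run r k) \<in> carrier_vec (m*n)"
  using run_in_Gset[of r k] Gset_carrier by (metis mult_mat_vec_carrier)

definition block_aligned :: "complex vec \<Rightarrow> nat \<Rightarrow> bool" where
  "block_aligned y c \<longleftrightarrow> (\<forall>h\<in>H. corr_v0 (h *\<^sub>v vec_block m y c) \<le> block_corr y c)"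

definition aligned_blocks :: "complex vec \<Rightarrow> nat \<Rightarrow> bool" where
  "aligned_blocks y l \<longleftrightarrow> (\<forall>c<l. block_aligned y c)"

definition sorted_blocks :: "complex vec \<Rightarrow> nat \<Rightarrow> bool" where
  "sorted_blocks y l \<longleftrightarrow> (\<forall>a b. a \<le> b \<longrightarrow> b < l \<longrightarrow> block_corr y a \<le> block_corr y b)"

lemma slot_step_blocks:
  assumes l: "l < n" and y: "y \<in> carrier_vec (m*n)"
  defines "y' \<equiv> nearest (slot_leaders l) y *\<^sub>v y"
  shows "\<And>c. c < n \<Longrightarrow> c \<noteq> l \<Longrightarrow> vec_block m y' c = vec_block m y c"
    and "block_aligned y' l"
proof -
  define D where "D h = blockmat m n id (\<lambda>i. if i = l then h else 1\<^sub>m m)" for h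
  have D_carrier: "\<forall>c<n. (if c = l then h else 1\<^sub>m m) \<in> carrier_mat m m" if "h \<in> H" for h
    using that H_elem_carrier by auto
  note C = slot_leaders_leader_set[of l]
  obtain h0 where h0: "h0 \<in> H" "nearest (slot_leaders l) y = D h0"
    using nearest_maximises_corr(1)[OF C y] unfolding slot_leaders_def D_def by auto
  have block: "vec_block m y' c = (if c = l then h0 else 1\<^sub>m m) *\<^sub>v vec_block m y c" if "c < n" for c
    using vec_block_blockmat_mult[OF permutes_id that D_carrier[OF h0(1)] y] h0(2)
    unfolding y'_def D_def by simp
  then show "\<And>c. c < n \<Longrightarrow> c \<noteq> l \<Longrightarrow> vec_block m y' c = vec_block m y c" by simp
  have corr_D: "corr (D h *\<^sub>v y) = u l * corr_v0 (h *\<^sub>v vec_block m y l)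
      + (\<Sum>c\<in>{..<n}-{l}. u c * block_corr y c)" if "h \<in> H" for h
    unfolding D_def corr_blockmat_mult[OF permutes_id D_carrier[OF that] y]
    by (subst sum.remove[of _ l]) (use l in \<open>auto intro!: sum.cong\<close>)
  have h0_best: "corr_v0 (h *\<^sub>v vec_block m y l) \<le> corr_v0 (h0 *\<^sub>v vec_block m y l)" if "h \<in> H" for h
  proof -
    have "corr (D h *\<^sub>v y) \<le> corr (D h0 *\<^sub>v y)"
      using nearest_maximises_corr(2)[OF C y, of "D h"] that h0(2)
      unfolding slot_leaders_def D_def by auto
    then show ?thesis using corr_D[OF that] corr_D[OF h0(1)] u_pos[OF l] by simp
  qed
  show "block_aligned y' l" unfolding block_aligned_def
  proof
    fix h assume h: "h \<in> H"
    have "h *\<^sub>v (h0 *\<^sub>v vec_block m y l) = (h * h0) *\<^sub>v vec_block m y l"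
      using H_elem_carrier[OF h] H_elem_carrier[OF h0(1)] by simp
    then show "corr_v0 (h *\<^sub>v vec_block m y' l) \<le> block_corr y' l"
      using block[OF l] h0_best[of "h * h0"] mult_in_H h h0(1) by simp
  qed
qed

lemma slot_step_invariant:
  assumes l: "l < n" and y: "y \<in> carrier_vec (m*n)"
    and aligned: "aligned_blocks y l" and sorted: "sorted_blocks y l"
  defines "y' \<equiv> nearest (slot_leaders l) y *\<^sub>v y"
  shows "aligned_blocks y' (Suc l)" "sorted_blocks y' l"
proof -
  have same: "vec_block m y' c = vec_block m y c" if "c < l" for c
    using slot_step_blocks(1)[OF l y] that l unfolding y'_def by simp
  show "aligned_blocks y' (Suc l)" unfolding aligned_blocks_def
  proof (intro allI impI)
    fix c assume "c < Suc l"
    then consider "c < l" | "c = l" by linarith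
    then show "block_aligned y' c"
    proof cases
      case 1
      then show ?thesis using aligned same[OF 1] unfolding aligned_blocks_def block_aligned_def by simp
    qed (use slot_step_blocks(2)[OF l y] y'_def in simp)
  qed
  show "sorted_blocks y' l" unfolding sorted_blocks_def
  proof (intro allI impI)
    fix a b assume "a \<le> b" "b < l"
    then show "block_corr y' a \<le> block_corr y' b"
      using sorted same[of a] same[of b] unfolding sorted_blocks_def by simp
  qed
qed

lemma cycle_step_blocks:
  assumes l: "l < n" and y: "y \<in> carrier_vec (m*n)"
  obtains j where "j \<le> l"
    and "\<And>p. p < n \<Longrightarrow> vec_block m (nearest (cycle_leaders l) y *\<^sub>v y) (cyc j l p) = vec_block m y p"
    and "\<And>j'. j' \<le> l \<Longrightarrow>
      (\<Sum>c<n. u (cyc j' l c) * block_corr y c) \<le> (\<Sum>c<n. u (cyc j l c) * block_corr y c)"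
proof -
  note C = cycle_leaders_leader_set[OF l]
  define D where "D j = blockmat m n (cyc j l) (\<lambda>_. 1\<^sub>m m)" for j
  obtain j where j: "j \<le> l" "nearest (cycle_leaders l) y = D j"
    using nearest_maximises_corr(1)[OF C y] unfolding cycle_leaders_def D_def by auto
  have one: "\<forall>c<n. 1\<^sub>m m \<in> carrier_mat m m" by simp
  have corr_D: "corr (D j' *\<^sub>v y) = (\<Sum>c<n. u (cyc j' l c) * block_corr y c)" if "j' \<le> l" for j'
    using corr_blockmat_mult[OF cyc_permutes[OF that l] one y] unfolding D_def by simp
  show ?thesis
  proof (rule that[OF j(1)])
    show "vec_block m (nearest (cycle_leaders l) y *\<^sub>v y) (cyc j l p) = vec_block m y p" if "p < n" for p
      using vec_block_blockmat_mult[OF cyc_permutes[OF j(1) l] that one y] j(2) unfolding D_def by simp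
    show "(\<Sum>c<n. u (cyc j' l c) * block_corr y c) \<le> (\<Sum>c<n. u (cyc j l c) * block_corr y c)"
      if "j' \<le> l" for j'
      using nearest_maximises_corr(2)[OF C y, of "D j'"] that j corr_D
      unfolding cycle_leaders_def D_def by auto
  qed
qed

lemma cycle_step_invariant:
  assumes l: "l < n" and y: "y \<in> carrier_vec (m*n)"
    and aligned: "aligned_blocks y (Suc l)" and sorted: "sorted_blocks y l"
  defines "y' \<equiv> nearest (cycle_leaders l) y *\<^sub>v y"
  shows "aligned_blocks y' (Suc l)" "sorted_blocks y' (Suc l)"
proof -
  obtain j where j: "j \<le> l" and moved: "\<And>p. p < n \<Longrightarrow> vec_block m y' (cyc j l p) = vec_block m y p"
    and opt: "\<And>j'. j' \<le> l \<Longrightarrow>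
      (\<Sum>c<n. u (cyc j' l c) * block_corr y c) \<le> (\<Sum>c<n. u (cyc j l c) * block_corr y c)"
    using cycle_step_blocks[OF l y] unfolding y'_def by blast
  note neighbours = cycle_optimal_neighbours[OF l j _ opt]
  have moved_le: "vec_block m y' (cyc j l p) = vec_block m y p" if "p \<le> l" for p
    using moved that l by simp
  show "aligned_blocks y' (Suc l)" unfolding aligned_blocks_def
  proof (intro allI impI)
    fix q assume "q < Suc l"
    then obtain p where "p \<le> l" "cyc j l p = q" using cyc_surj[of q l j] j by auto
    then show "block_aligned y' q"
      using aligned moved_le unfolding aligned_blocks_def block_aligned_def by auto
  qed
  show "sorted_blocks y' (Suc l)" unfolding sorted_blocks_def
  proof (intro allI impI)
    fix a b assume ab: "a \<le> b" "b < Suc l"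
    obtain p where p: "p \<le> l" "cyc j l p = a" using cyc_surj[of a l j] ab j by auto
    obtain p' where p': "p' \<le> l" "cyc j l p' = b" using cyc_surj[of b l j] ab j by auto
    have "block_corr y p \<le> block_corr y p'"
      by (rule cycle_insertion_monotone[OF _ j neighbours p(1) p'(1)])
        (use sorted u_strict_mono ab p p' in \<open>auto simp: sorted_blocks_def\<close>)
    then show "block_corr y' a \<le> block_corr y' b"
      using moved_le[OF p(1)] moved_le[OF p'(1)] p(2) p'(2) by simp
  qed
qed

lemma run_invariant:
  assumes r: "r \<in> carrier_vec (m*n)"
  shows "1 \<le> k \<Longrightarrow> k \<le> 2*n - 1 \<Longrightarrow>
    aligned_blocks (snd (run r k)) (k div 2 + 1) \<and> sorted_blocks (snd (run r k)) ((k + 1) div 2)"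
proof (induction k)
  case (Suc k)
  let ?y = "snd (run r k)"
  define l where "l = Suc k div 2"
  have l: "l < n" unfolding l_def using Suc.prems by auto
  have y: "?y \<in> carrier_vec (m*n)" using run_carrier[OF r] Suc.prems by simp
  have step: "snd (run r (Suc k)) = nearest (CL m n H (Suc k)) ?y *\<^sub>v ?y" by (rule run_Suc)
  consider "k = 0" | "k \<noteq> 0" "even (Suc k)" | "k \<noteq> 0" "odd (Suc k)" by blast
  then show ?case
  proof cases
    case 1
    then have "CL m n H (Suc k) = slot_leaders 0" "l = 0" by (simp_all add: CL_eq l_def)
    moreover have "sorted_blocks (snd (run r (Suc k))) 1" by (simp add: sorted_blocks_def)
    ultimately show ?thesis
      using slot_step_invariant(1)[OF l y] 1 step by (simp add: aligned_blocks_def sorted_blocks_def)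
  next
    case 2
    then have idx: "k div 2 + 1 = l" "(k + 1) div 2 = l" "Suc k div 2 + 1 = Suc l" "(Suc k + 1) div 2 = l"
      unfolding l_def by presburger+
    have "CL m n H (Suc k) = slot_leaders l" using 2 by (simp add: CL_eq l_def)
    then show ?thesis
      using slot_step_invariant[OF l y] Suc.IH Suc.prems 2 idx step by simp
  next
    case 3
    then have idx: "k div 2 + 1 = Suc l" "(k + 1) div 2 = l" "Suc k div 2 + 1 = Suc l" "(Suc k + 1) div 2 = Suc l"
      unfolding l_def by presburger+
    have "CL m n H (Suc k) = cycle_leaders l" using 3 by (simp add: CL_eq l_def)
    then show ?thesis
      using cycle_step_invariant[OF l y] Suc.IH Suc.prems 3 idx step by simp
  qed
qed simp

lemma corr_Gset_mult_le:
  assumes y: "y \<in> carrier_vec (m*n)" and Q: "Q \<in> G"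
    and aligned: "aligned_blocks y n" and sorted: "sorted_blocks y n"
  shows "corr (Q *\<^sub>v y) \<le> corr y"
proof -
  obtain \<sigma> hs where Q: "Q = blockmat m n \<sigma> hs" and \<sigma>: "\<sigma> permutes {..<n}" and hs: "\<forall>c<n. hs c \<in> H"
    using Q by (rule GsetE)
  let ?i = "inv_into UNIV \<sigma>"
  have "corr (Q *\<^sub>v y) = (\<Sum>c<n. u (\<sigma> c) * corr_v0 (hs c *\<^sub>v vec_block m y c))"
    unfolding Q using corr_blockmat_mult[OF \<sigma> _ y] hs H_elem_carrier by simp
  also have "\<dots> \<le> (\<Sum>c<n. u (\<sigma> c) * block_corr y c)"
  proof (rule sum_mono)
    fix c assume c: "c \<in> {..<n}"
    then have "corr_v0 (hs c *\<^sub>v vec_block m y c) \<le> block_corr y c"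
      using aligned hs unfolding aligned_blocks_def block_aligned_def by simp
    then show "u (\<sigma> c) * corr_v0 (hs c *\<^sub>v vec_block m y c) \<le> u (\<sigma> c) * block_corr y c"
      using u_pos[OF permutes_lessThan_less[OF \<sigma>]] c by (simp add: mult_left_mono)
  qed
  also have "\<dots> = (\<Sum>c<n. u (\<sigma> c) * block_corr y (?i (\<sigma> c)))"
    using \<sigma> by (simp add: permutes_inverses)
  also have "\<dots> = (\<Sum>p<n. u p * block_corr y (?i p))"
    using sum.reindex_bij_betw[OF permutes_imp_bij[OF \<sigma>], of "\<lambda>p. u p * block_corr y (?i p)"]
    by simp
  also have "\<dots> \<le> (\<Sum>p<n. u p * block_corr y p)"
    by (rule rearrangement_inequality[OF permutes_inv[OF \<sigma>]])
      (use u_mono sorted in \<open>auto simp: sorted_blocks_def\<close>)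
  also have "\<dots> = corr y" by (simp add: corr_eq_sum_blocks)
  finally show ?thesis .
qed

lemma decode_maximises_corr:
  assumes r: "r \<in> carrier_vec (m*n)" and Q: "Q \<in> G"
  shows "corr (Q *\<^sub>v r) \<le> corr (decode m n H rk x0 r *\<^sub>v r)"
proof -
  define P where "P = decode m n H rk x0 r"
  have last: "2*n - 1 \<le> 2*n - 1" "1 \<le> 2*n - 1" using n_pos by auto
  have P: "P \<in> G" and y: "snd (run r (2*n - 1)) = P *\<^sub>v r"
    using run_in_Gset[OF r last(1)] unfolding P_def decode_def by auto
  have "(2*n - 1) div 2 + 1 = n" "(2*n - 1 + 1) div 2 = n" using n_pos by auto
  then have aligned: "aligned_blocks (P *\<^sub>v r) n" and sorted: "sorted_blocks (P *\<^sub>v r) n"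
    using run_invariant[OF r last(2,1)] y by auto
  have Pc: "P \<in> carrier_mat (m*n) (m*n)" and Qc: "Q \<in> carrier_mat (m*n) (m*n)"
    using Gset_carrier P Q by auto
  have "Q *\<^sub>v r = Q *\<^sub>v ((mat_adjoint P * P) *\<^sub>v r)" using Gset_adjoint(2)[OF P] r by simp
  also have "\<dots> = (Q * mat_adjoint P) *\<^sub>v (P *\<^sub>v r)" using Pc Qc r mat_adjoint_carrier[OF Pc] by simp
  finally have "corr (Q *\<^sub>v r) = corr ((Q * mat_adjoint P) *\<^sub>v (P *\<^sub>v r))" by simp
  also have "\<dots> \<le> corr (P *\<^sub>v r)"
    using corr_Gset_mult_le[OF _ Gset_mult[OF Q Gset_adjoint(1)[OF P]] aligned sorted] Pc r by simp
  finally show ?thesis unfolding P_def .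
qed

lemma vnorm_minus_matinv_Gset:
  assumes Q: "Q \<in> G" and r: "r \<in> carrier_vec (m*n)"
  shows "vnorm (r - matinv (m*n) Q *\<^sub>v x0) = vnorm (Q *\<^sub>v r - x0)"
proof -
  have Qc: "Q \<in> carrier_mat (m*n) (m*n)" using Gset_carrier Q .
  have a: "mat_adjoint Q *\<^sub>v x0 \<in> carrier_vec (m*n)" using mat_adjoint_carrier[OF Qc] x0_carrier by simp
  have "Q *\<^sub>v (r - mat_adjoint Q *\<^sub>v x0) = Q *\<^sub>v r - (Q * mat_adjoint Q) *\<^sub>v x0"
    using mult_minus_distrib_mat_vec[OF Qc r a] mat_adjoint_carrier[OF Qc] Qc x0_carrier by simp
  also have "\<dots> = Q *\<^sub>v r - x0" using Gset_adjoint(3)[OF Q] x0_carrier by simp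
  finally show ?thesis
    using vnorm_Gset_mult[OF Q, of "r - mat_adjoint Q *\<^sub>v x0"] r a by (simp add: matinv_Gset[OF Q])
qed

lemma decodes_robustly: "decodes_robustly m n H rk x0"
  unfolding decodes_robustly_def
proof (intro ballI impI)
  fix g r assume g: "g \<in> G" and r: "r \<in> carrier_vec (m*n)"
    and ml: "\<forall>h\<in>G. h \<notin> (\<lambda>s. s * g) ` Stab m n H x0 \<longrightarrow>
      vnorm (r - matinv (m*n) g *\<^sub>v x0) < vnorm (r - matinv (m*n) h *\<^sub>v x0)"
  define P where "P = decode m n H rk x0 r"
  have P: "P \<in> G"
    using run_in_Gset[OF r, of "2*n - 1"] unfolding P_def decode_def by simp
  have "\<not> vnorm (g *\<^sub>v r - x0) < vnorm (P *\<^sub>v r - x0)"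
    using decode_maximises_corr[OF r g] Gset_dist_le_iff_corr_ge[OF P g r]
    unfolding P_def by (simp add: not_less)
  then show "P \<in> (\<lambda>s. s * g) ` Stab m n H x0"
    using ml P by (auto simp: vnorm_minus_matinv_Gset[OF g r] vnorm_minus_matinv_Gset[OF P r])
qed

end

theorem mainTheorem14:
  fixes m n :: nat and H :: "complex mat set" and v0 :: "complex vec"
    and u :: "nat \<Rightarrow> real" and rk :: "complex mat \<Rightarrow> nat"
  assumes "m \<ge> 1" and "n \<ge> 1"
    and "finite H" and "H \<subseteq> carrier_mat m m"
    and "1\<^sub>m m \<in> H"
    and "\<forall>a\<in>H. \<forall>b\<in>H. a * b \<in> H"
    and "\<forall>a\<in>H. \<exists>b\<in>H. a * b = 1\<^sub>m m \<and> b * a = 1\<^sub>m m"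
    and "\<forall>h\<in>H. h * mat_adjoint h = 1\<^sub>m m"
    and "v0 \<in> carrier_vec m" and "vnorm v0 = 1"
    and "\<forall>h\<in>H. h \<noteq> 1\<^sub>m m \<longrightarrow> vnorm (1\<^sub>m m *\<^sub>v v0 - v0) < vnorm (h *\<^sub>v v0 - v0)"
    and "0 < u 0" and "\<forall>i j. i < j \<and> j < n \<longrightarrow> u i < u j"
    and "vnorm (x0vec m n u v0) = 1"
    and "inj_on rk (Gset m n H)"
  shows "decodes_robustly m n H rk (x0vec m n u v0)"
proof -
  interpret wreath_decoder m n H v0 u rk
    by (rule wreath_decoder.intro) (use assms in auto)
  show ?thesis by (rule decodes_robustly)
qed

end
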